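(* Let $r,\delta,n,h$ be positive integers and $\lambda$ an integer with $r\ge 2$, $n\geq (\lambda+1)(h+1)^2$, $\lambda\geq r-1$ and $h\geq\delta$. If $G\in \mathcal{K}_{n,\delta}^{\lambda_r^h}$ (with $\lambda^h_r=\lambda$), then $$n-(r-1)(h+1)-1<\rho(G)< n-(r-1)(h+1).$$
   Context: All graphs are finite and simple; $\rho(G)$ denotes the spectral radius of the adjacency matrix of $G$; $K_m$ is the complete graph on $m$ vertices, $\cup$ denotes disjoint union, $sK_m$ denotes $s$ disjoint copies of $K_m$. For integers $r\ge 2$, $h\ge 0$, the $h$-extra $r$-component edge-connectivity $\lambda^h_r(G)$ of a graph $G$ is the minimum size of an edge subset $F\subseteq E(G)$ such that $G-F$ is disconnected, has at least $r$ connected components, and every component of $G-F$ has at least $h+1$ vertices. $\mathcal{K}_{n,\delta}^{\lambda_r^h}$ denotes the set of graphs $G$ with $h$-extra $r$-component edge-connectivity $\lambda^h_r(G)=\lambda$ and minimum degree $\delta$ that are obtained from $K_{n-(r-1)(h+1)}\cup (r-2)K_{h+1}\cup K_h\cup K_1$ as follows: add $t$ edges between the vertex of $K_1$ and vertices of $K_h$, for some $1\leq t\leq \delta$; add $r-1$ edges joining a vertex of $K_{n-(r-1)(h+1)}$ to one vertex in each copy of $K_{h+1}$ and to one vertex of $K_h$; and then add $\lambda-r+1-\delta+t$ further edges between $K_{n-(r-1)(h+1)}$ and $(r-2)K_{h+1}\cup K_h\cup K_1$. *)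

theory Defs
  imports Main "Jordan_Normal_Form.Spectral_Radius"
begin

definition simple_graph :: "nat \<Rightarrow> nat set set \<Rightarrow> bool" where
  "simple_graph n E \<longleftrightarrow> (\<forall>e\<in>E. e \<subseteq> {0..<n} \<and> card e = 2)"

definition adj_mat :: "nat \<Rightarrow> nat set set \<Rightarrow> complex mat" where
  "adj_mat n E = mat n n (\<lambda>(i, j). if {i, j} \<in> E \<and> i \<noteq> j then 1 else 0)"

definition graph_spectral_radius :: "nat \<Rightarrow> nat set set \<Rightarrow> real" where
  "graph_spectral_radius n E = spectral_radius (adj_mat n E)"

definition degree :: "nat set set \<Rightarrow> nat \<Rightarrow> nat" where
  "degree E v = card {u. {u, v} \<in> E \<and> u \<noteq> v}"

definition min_degree :: "nat \<Rightarrow> nat set set \<Rightarrow> nat" where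
  "min_degree n E = Min (degree E ` {0..<n})"

definition reach :: "nat \<Rightarrow> nat set set \<Rightarrow> nat \<Rightarrow> nat \<Rightarrow> bool" where
  "reach n E = (\<lambda>x y. x \<in> {0..<n} \<and> y \<in> {0..<n} \<and> {x, y} \<in> E \<and> x \<noteq> y)\<^sup>*\<^sup>*"

definition components :: "nat \<Rightarrow> nat set set \<Rightarrow> nat set set" where
  "components n E = {C. \<exists>x\<in>{0..<n}. C = {y \<in> {0..<n}. reach n E x y}}"

text \<open>F is an h-extra r-component edge cut: G - F has at least r components
(hence is disconnected, as r \<ge> 2) and every component has at least h+1 vertices.\<close>

definition extra_r_cut :: "nat \<Rightarrow> nat set set \<Rightarrow> nat \<Rightarrow> nat \<Rightarrow> nat set set \<Rightarrow> bool" where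
  "extra_r_cut n E h r F \<longleftrightarrow> F \<subseteq> E \<and> card (components n (E - F)) \<ge> r
     \<and> (\<forall>C\<in>components n (E - F). card C \<ge> h + 1)"

definition extra_r_edge_conn_eq :: "nat \<Rightarrow> nat set set \<Rightarrow> nat \<Rightarrow> nat \<Rightarrow> nat \<Rightarrow> bool" where
  "extra_r_edge_conn_eq n E h r l \<longleftrightarrow>
     (\<exists>F. extra_r_cut n E h r F \<and> card F = l) \<and> (\<forall>F. extra_r_cut n E h r F \<longrightarrow> l \<le> card F)"

definition clique_edges :: "nat set \<Rightarrow> nat set set" where
  "clique_edges S = {{x, y} | x y. x \<in> S \<and> y \<in> S \<and> x \<noteq> y}"

text \<open>The class K^{lambda^h_r}_{n,delta}: graphs on {0..<n} (up to labelling) obtained from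
K_{n-(r-1)(h+1)} (on A) \<union> (r-2) K_{h+1} (on B 0, ..., B (r-3)) \<union> K_h (on C) \<union> K_1 (on {v})
by adding t edges between v and C (1 \<le> t \<le> delta), r-1 edges X from a vertex a of A to one vertex
of each B i and one vertex of C, and l-r+1-delta+t further edges Y between A and the rest;
moreover lambda^h_r(G) = l and the minimum degree is delta.\<close>

definition in_K_class :: "nat \<Rightarrow> nat \<Rightarrow> nat \<Rightarrow> nat \<Rightarrow> nat \<Rightarrow> nat set set \<Rightarrow> bool" where
  "in_K_class n \<delta> h r l E \<longleftrightarrow>
     simple_graph n E \<and> min_degree n E = \<delta> \<and> extra_r_edge_conn_eq n E h r l \<and>
     (\<exists>A B C v t a b c Ev X Y.
        \<comment> \<open>vertex partition\<close>
        A \<union> (\<Union>i<r-2. B i) \<union> C \<union> {v} = {0..<n} \<and>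
        card A = n - (r - 1) * (h + 1) \<and>
        (\<forall>i<r-2. card (B i) = h + 1) \<and> card C = h \<and>
        (\<forall>i<r-2. A \<inter> B i = {}) \<and> (\<forall>i<r-2. \<forall>j<r-2. i \<noteq> j \<longrightarrow> B i \<inter> B j = {}) \<and>
        (\<forall>i<r-2. B i \<inter> C = {}) \<and> A \<inter> C = {} \<and>
        v \<notin> A \<and> (\<forall>i<r-2. v \<notin> B i) \<and> v \<notin> C \<and>
        \<comment> \<open>t edges between v and C\<close>
        1 \<le> t \<and> t \<le> \<delta> \<and> Ev \<subseteq> {{v, x} | x. x \<in> C} \<and> card Ev = t \<and>
        \<comment> \<open>r-1 edges from a vertex a of A\<close>
        a \<in> A \<and> (\<forall>i<r-2. b i \<in> B i) \<and> c \<in> C \<and>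
        X = {{a, b i} | i. i < r - 2} \<union> {{a, c}} \<and>
        \<comment> \<open>further edges between A and the rest\<close>
        Y \<subseteq> {{x, y} | x y. x \<in> A \<and> y \<in> (\<Union>i<r-2. B i) \<union> C \<union> {v}} \<and> Y \<inter> X = {} \<and>
        int (card Y) = int l - int r + 1 - int \<delta> + int t \<and>
        E = clique_edges A \<union> (\<Union>i<r-2. clique_edges (B i)) \<union> clique_edges C \<union> Ev \<union> X \<union> Y)"

end

theory Submission
  imports Defs "HOL-Real_Asymp.Real_Asymp"
begin

text \<open>
  The graphs in question consist of a clique \<open>A\<close> of size \<open>m = n - (r - 1)(h + 1)\<close> together
  with \<open>(r - 1)(h + 1)\<close> further vertices, each having at most \<open>h\<close> neighbours outside \<open>A\<close>, and
  with at most \<open>\<lambda>\<close> edges between \<open>A\<close> and the rest. For the symmetric nonnegative adjacency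
  matrix \<open>Adj\<close>, a positive vector \<open>w\<close> with \<open>Adj w < s w\<close> row by row shows \<open>\<rho> < s\<close>, and a
  nonnegative nonzero \<open>x\<close> with \<open>Adj x \<ge> s x\<close> shows \<open>\<rho> \<ge> s\<close>. Weighting the clique by 1
  and an outside vertex by (its number of neighbours in \<open>A\<close> plus a little) divided by \<open>m\<close>
  gives \<open>\<rho> < m\<close> once \<open>n\<close> is large; the all-ones vector on \<open>A\<close>, slightly perturbed along
  one edge leaving \<open>A\<close>, gives \<open>\<rho> > m - 1\<close>.
\<close>

section \<open>Nonnegative matrices\<close>

lemma mult_mat_vec_index_sum:
  "A \<in> carrier_mat n n \<Longrightarrow> v \<in> carrier_vec n \<Longrightarrow> i < n \<Longrightarrow> (A *\<^sub>v v) $ i = (\<Sum>j<n. A $$ (i, j) * v $ j)"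
  by (auto simp: scalar_prod_def lessThan_atLeast0 intro!: sum.cong)

lemma mult_mat_index_sum:
  "A \<in> carrier_mat n n \<Longrightarrow> B \<in> carrier_mat n n \<Longrightarrow> i < n \<Longrightarrow> j < n
   \<Longrightarrow> (A * B) $$ (i, j) = (\<Sum>l<n. A $$ (i, l) * B $$ (l, j))"
  by (auto simp: scalar_prod_def lessThan_atLeast0 intro!: sum.cong)

lemma spectral_radius_smult_ge:
  assumes A: "A \<in> carrier_mat n n" and n: "0 < n"
  shows "norm c * spectral_radius A \<le> spectral_radius (c \<cdot>\<^sub>m A)"
proof -
  obtain \<mu> where "\<mu> \<in> spectrum A" and \<rho>: "spectral_radius A = norm \<mu>"
    using spectral_radius_mem_max(1)[OF A n] by auto
  then obtain v where ev: "eigenvector A v \<mu>"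
    unfolding spectrum_def eigenvalue_def by auto
  then have v: "v \<in> carrier_vec n" and Av: "A *\<^sub>v v = \<mu> \<cdot>\<^sub>v v"
    using A unfolding eigenvector_def by auto
  have "(c \<cdot>\<^sub>m A) *\<^sub>v v = c \<cdot>\<^sub>v (A *\<^sub>v v)"
    using A v by (intro eq_vecI) auto
  also have "\<dots> = (c * \<mu>) \<cdot>\<^sub>v v"
    by (simp add: Av smult_smult_assoc)
  finally have "eigenvector (c \<cdot>\<^sub>m A) v (c * \<mu>)"
    using ev A unfolding eigenvector_def by auto
  then have "norm (c * \<mu>) \<in> norm ` spectrum (c \<cdot>\<^sub>m A)"
    unfolding spectrum_def eigenvalue_def by auto
  from spectral_radius_mem_max(2)[OF smult_carrier_mat[OF A] n this]
  show ?thesis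
    using \<rho> by (simp add: norm_mult)
qed

lemma nonneg_mat_pow_nonneg:
  fixes B :: "real mat"
  assumes B: "B \<in> carrier_mat n n" and B_nonneg: "\<And>i j. i < n \<Longrightarrow> j < n \<Longrightarrow> 0 \<le> B $$ (i, j)"
    and "i < n" "j < n"
  shows "0 \<le> (B ^\<^sub>m k) $$ (i, j)"
  using \<open>i < n\<close> \<open>j < n\<close>
proof (induction k arbitrary: i j)
  case 0
  then show ?case
    using B by simp
next
  case (Suc k)
  have "(B ^\<^sub>m Suc k) $$ (i, j) = (\<Sum>l<n. (B ^\<^sub>m k) $$ (i, l) * B $$ (l, j))"
    using mult_mat_index_sum[OF pow_carrier_mat[OF B] B Suc.prems] by simp
  also have "\<dots> \<ge> 0"
    using Suc B_nonneg by (intro sum_nonneg) auto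
  finally show ?case .
qed

lemma nonneg_mat_pow_supersolution:
  fixes B :: "real mat"
  assumes B: "B \<in> carrier_mat n n" and B_nonneg: "\<And>i j. i < n \<Longrightarrow> j < n \<Longrightarrow> 0 \<le> B $$ (i, j)"
    and q: "0 \<le> q" and rows: "\<And>i. i < n \<Longrightarrow> q * x i \<le> (\<Sum>j<n. B $$ (i, j) * x j)"
    and "i < n"
  shows "q ^ k * x i \<le> (\<Sum>j<n. (B ^\<^sub>m k) $$ (i, j) * x j)"
  using \<open>i < n\<close>
proof (induction k arbitrary: i)
  case 0
  then have "(\<Sum>j<n. (B ^\<^sub>m 0) $$ (i, j) * x j) = (\<Sum>j<n. if j = i then x j else 0)"
    using B by (intro sum.cong) auto
  then show ?case
    using 0 by simp
next
  case (Suc k)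
  let ?P = "B ^\<^sub>m k"
  have "q * (q ^ k * x i) \<le> q * (\<Sum>l<n. ?P $$ (i, l) * x l)"
    using Suc q by (simp add: mult_left_mono)
  also have "\<dots> = (\<Sum>l<n. ?P $$ (i, l) * (q * x l))"
    by (simp add: sum_distrib_left algebra_simps)
  also have "\<dots> \<le> (\<Sum>l<n. ?P $$ (i, l) * (\<Sum>j<n. B $$ (l, j) * x j))"
    using rows nonneg_mat_pow_nonneg[OF B B_nonneg] Suc.prems
    by (intro sum_mono mult_left_mono) auto
  also have "\<dots> = (\<Sum>l<n. \<Sum>j<n. ?P $$ (i, l) * B $$ (l, j) * x j)"
    by (simp add: sum_distrib_left mult.assoc)
  also have "\<dots> = (\<Sum>j<n. \<Sum>l<n. ?P $$ (i, l) * B $$ (l, j) * x j)"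
    by (rule sum.swap)
  also have "\<dots> = (\<Sum>j<n. (\<Sum>l<n. ?P $$ (i, l) * B $$ (l, j)) * x j)"
    by (simp add: sum_distrib_right)
  also have "\<dots> = (\<Sum>j<n. (B ^\<^sub>m Suc k) $$ (i, j) * x j)"
    using Suc.prems by (intro sum.cong) (simp_all add: mult_mat_index_sum[OF pow_carrier_mat[OF B] B])
  finally show ?case
    by simp
qed

lemma real_mat_pow_poly_bound:
  fixes B :: "real mat"
  assumes B: "B \<in> carrier_mat n n" and \<rho>: "spectral_radius (of_real_hom.mat_hom B) \<le> 1"
  obtains c1 c2 where
    "\<And>k i j. i < n \<Longrightarrow> j < n \<Longrightarrow> \<bar>(B ^\<^sub>m k) $$ (i, j)\<bar> \<le> c1 + c2 * real k ^ (n - 1)"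
proof -
  let ?B = "of_real_hom.mat_hom B :: complex mat"
  have "?B \<in> carrier_mat n n"
    using B by simp
  from spectral_radius_jnf_norm_bound_le_1_upper_triangular[OF this \<rho>]
  obtain c1 c2 where bound: "\<forall>k. norm_bound (?B ^\<^sub>m k) (c1 + c2 * of_nat k ^ (n - 1))"
    by blast
  have "\<bar>(B ^\<^sub>m k) $$ (i, j)\<bar> \<le> c1 + c2 * real k ^ (n - 1)" if "i < n" "j < n" for k i j
  proof -
    have "(?B ^\<^sub>m k) $$ (i, j) = complex_of_real ((B ^\<^sub>m k) $$ (i, j))"
      using that B by (simp add: of_real_hom.mat_hom_pow[OF B, symmetric])
    moreover have "norm ((?B ^\<^sub>m k) $$ (i, j)) \<le> c1 + c2 * real k ^ (n - 1)"
      using bound that B unfolding norm_bound_def by auto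
    ultimately show ?thesis
      by simp
  qed
  then show ?thesis
    using that by blast
qed

lemma geometric_exceeds_poly:
  fixes q y c1 c2 X :: real
  assumes q: "1 < q" and y: "0 < y"
  obtains k where "(c1 + c2 * real k ^ d) * X < q ^ k * y"
proof -
  have "(\<lambda>k. (c1 + c2 * real k ^ d) * X / q ^ k) \<longlonglongrightarrow> 0"
    using q by real_asymp
  from order_tendstoD(2)[OF this y]
  obtain k where "(c1 + c2 * real k ^ d) * X / q ^ k < y"
    by (auto simp: eventually_sequentially)
  then have "(c1 + c2 * real k ^ d) * X < y * q ^ k"
    using q by (simp add: divide_less_eq)
  then show ?thesis
    using that[of k] by (simp add: mult.commute[of y])
qed

section \<open>Test vectors for the adjacency matrix\<close>

definition adj :: "nat set set \<Rightarrow> nat \<Rightarrow> nat \<Rightarrow> real" where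
  "adj E i j = (if {i, j} \<in> E \<and> i \<noteq> j then 1 else 0)"

lemma adj_sym: "adj E i j = adj E j i"
  unfolding adj_def by (auto simp: insert_commute)

lemma adj_nonneg: "0 \<le> adj E i j"
  unfolding adj_def by auto

lemma adj_mat_carrier: "adj_mat n E \<in> carrier_mat n n"
  unfolding adj_mat_def by auto

lemma dim_adj_mat [simp]: "dim_row (adj_mat n E) = n" "dim_col (adj_mat n E) = n"
  unfolding adj_mat_def by simp_all

lemma adj_mat_index: "i < n \<Longrightarrow> j < n \<Longrightarrow> adj_mat n E $$ (i, j) = complex_of_real (adj E i j)"
  unfolding adj_mat_def adj_def by auto

lemma sum_adj_eq_card:
  "finite S \<Longrightarrow> (\<Sum>j\<in>S. adj E i j) = real (card {j \<in> S. {i, j} \<in> E \<and> i \<noteq> j})"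
  unfolding adj_def by (simp add: sum.If_cases Int_def)

lemma sum_sum_adj_eq_card:
  assumes "finite S" "finite T" "S \<inter> T = {}"
  shows "(\<Sum>u\<in>S. \<Sum>z\<in>T. adj E u z) = real (card {(u, z) \<in> S \<times> T. {u, z} \<in> E})"
proof -
  have "{(u, z) \<in> S \<times> T. {u, z} \<in> E} = Sigma S (\<lambda>u. {z \<in> T. {u, z} \<in> E \<and> u \<noteq> z})"
    using assms(3) by auto
  moreover have "finite {z \<in> T. {u, z} \<in> E \<and> u \<noteq> z}" for u
    using assms(2) by simp
  ultimately show ?thesis
    using assms by (simp add: sum_adj_eq_card card_SigmaI)
qed

lemma sum_adj_swap:
  "(\<Sum>i<n. w i * (\<Sum>j<n. adj E i j * y j)) = (\<Sum>j<n. y j * (\<Sum>i<n. adj E j i * w i))"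
proof -
  have "(\<Sum>i<n. w i * (\<Sum>j<n. adj E i j * y j)) = (\<Sum>i<n. \<Sum>j<n. w i * adj E i j * y j)"
    by (simp add: sum_distrib_left mult.assoc)
  also have "\<dots> = (\<Sum>j<n. \<Sum>i<n. w i * adj E i j * y j)"
    by (rule sum.swap)
  finally show ?thesis
    by (simp add: sum_distrib_left adj_sym mult.commute mult.left_commute)
qed

lemma eigenvector_adj_mat_norm_le:
  assumes ev: "eigenvector (adj_mat n E) v \<mu>" and i: "i < n"
  shows "norm \<mu> * norm (v $ i) \<le> (\<Sum>j<n. adj E i j * norm (v $ j))"
proof -
  have v: "v \<in> carrier_vec n" and Mv: "adj_mat n E *\<^sub>v v = \<mu> \<cdot>\<^sub>v v"
    using ev unfolding eigenvector_def by auto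
  have "\<mu> * v $ i = (adj_mat n E *\<^sub>v v) $ i"
    using Mv i v by simp
  also have "\<dots> = (\<Sum>j<n. complex_of_real (adj E i j) * v $ j)"
    using i by (simp add: mult_mat_vec_index_sum[OF adj_mat_carrier v i] adj_mat_index)
  finally have "norm \<mu> * norm (v $ i) = norm (\<Sum>j<n. complex_of_real (adj E i j) * v $ j)"
    by (metis norm_mult)
  also have "\<dots> \<le> (\<Sum>j<n. norm (complex_of_real (adj E i j) * v $ j))"
    by (rule norm_sum)
  also have "\<dots> = (\<Sum>j<n. adj E i j * norm (v $ j))"
    by (intro sum.cong) (auto simp: norm_mult adj_def)
  finally show ?thesis .
qed

text \<open>
  Pair the row inequalities with the moduli of an eigenvector \<open>v\<close> of maximal modulus eigenvalue;
  by symmetry of the adjacency matrix, \<open>\<rho> \<Sum> w\<^sub>i |v\<^sub>i| \<le> \<Sum> |v\<^sub>j| (Adj w)\<^sub>j < s \<Sum> w\<^sub>j |v\<^sub>j|\<close>.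
\<close>

lemma graph_spectral_radius_less:
  assumes n: "0 < n" and w_pos: "\<And>i. i < n \<Longrightarrow> 0 < w i"
    and rows: "\<And>i. i < n \<Longrightarrow> (\<Sum>j<n. adj E i j * w j) < s * w i"
  shows "graph_spectral_radius n E < s"
proof -
  obtain \<mu> where "\<mu> \<in> spectrum (adj_mat n E)" and \<rho>: "graph_spectral_radius n E = norm \<mu>"
    using spectral_radius_mem_max(1)[OF adj_mat_carrier n] unfolding graph_spectral_radius_def by auto
  then obtain v where ev: "eigenvector (adj_mat n E) v \<mu>"
    unfolding spectrum_def eigenvalue_def by auto
  then have v: "v \<in> carrier_vec n" and "v \<noteq> 0\<^sub>v n"
    unfolding eigenvector_def by auto
  then obtain j0 where j0: "j0 < n" "v $ j0 \<noteq> 0"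
    by (metis eq_vecI carrier_vecD index_zero_vec(1,2))
  define y where "y j = norm (v $ j)" for j
  have y_nonneg: "0 \<le> y j" for j
    unfolding y_def by simp
  have wy_pos: "0 < (\<Sum>i<n. w i * y i)"
    using j0 w_pos y_nonneg
    by (intro sum_pos2[of _ j0]) (auto simp: y_def intro!: mult_nonneg_nonneg w_pos[THEN less_imp_le])
  have "norm \<mu> * (\<Sum>i<n. w i * y i) = (\<Sum>i<n. w i * (norm \<mu> * y i))"
    by (simp add: sum_distrib_left algebra_simps)
  also have "\<dots> \<le> (\<Sum>i<n. w i * (\<Sum>j<n. adj E i j * y j))"
    using eigenvector_adj_mat_norm_le[OF ev] w_pos
    by (intro sum_mono mult_left_mono) (auto simp: y_def less_imp_le)
  also have "\<dots> = (\<Sum>j<n. y j * (\<Sum>i<n. adj E j i * w i))"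
    by (rule sum_adj_swap)
  also have "\<dots> < (\<Sum>j<n. y j * (s * w j))"
  proof (rule sum_strict_mono_ex1)
    show "\<forall>j\<in>{..<n}. y j * (\<Sum>i<n. adj E j i * w i) \<le> y j * (s * w j)"
      using rows y_nonneg by (meson less_imp_le lessThan_iff mult_left_mono)
    show "\<exists>j\<in>{..<n}. y j * (\<Sum>i<n. adj E j i * w i) < y j * (s * w j)"
      using rows[OF j0(1)] j0 by (intro bexI[of _ j0]) (auto simp: y_def)
  qed simp
  also have "\<dots> = s * (\<Sum>i<n. w i * y i)"
    by (simp add: sum_distrib_left algebra_simps)
  finally show ?thesis
    using \<rho> wy_pos by (simp add: mult_less_cancel_right)
qed

lemma adj_mat_pow_poly_bound:
  assumes \<rho>: "graph_spectral_radius n E \<le> t" and t: "0 < t" and n: "0 < n"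
  obtains c1 c2 where "\<And>k i j. i < n \<Longrightarrow> j < n
    \<Longrightarrow> \<bar>(mat n n (\<lambda>(i, j). adj E i j / t) ^\<^sub>m k) $$ (i, j)\<bar> \<le> c1 + c2 * real k ^ (n - 1)"
proof -
  define B :: "real mat" where "B = mat n n (\<lambda>(i, j). adj E i j / t)"
  have B: "B \<in> carrier_mat n n"
    unfolding B_def by simp
  have "adj_mat n E = complex_of_real t \<cdot>\<^sub>m of_real_hom.mat_hom B"
    using t by (intro eq_matI) (auto simp: B_def adj_mat_index)
  then have "t * spectral_radius (of_real_hom.mat_hom B) \<le> graph_spectral_radius n E"
    using spectral_radius_smult_ge[of "of_real_hom.mat_hom B" n "complex_of_real t"] B n t
    unfolding graph_spectral_radius_def by simp
  then have "t * spectral_radius (of_real_hom.mat_hom B) \<le> t"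
    using \<rho> by linarith
  then have "spectral_radius (of_real_hom.mat_hom B) \<le> 1"
    using t by (simp add: mult_le_cancel_left1)
  then obtain c1 c2 where
    "\<And>k i j. i < n \<Longrightarrow> j < n \<Longrightarrow> \<bar>(B ^\<^sub>m k) $$ (i, j)\<bar> \<le> c1 + c2 * real k ^ (n - 1)"
    using real_mat_pow_poly_bound[OF B] by blast
  then show ?thesis
    unfolding B_def by (rule that)
qed

text \<open>
  If \<open>\<rho> \<le> t\<close>, the entries of \<open>(Adj / t)\<^sup>k\<close> grow polynomially in \<open>k\<close> (Jordan normal form),
  whereas \<open>Adj x \<ge> s x\<close> makes \<open>(Adj / t)\<^sup>k x \<ge> (s / t)\<^sup>k x\<close> grow geometrically.
\<close>

lemma graph_spectral_radius_greater:
  assumes t: "0 < t" and ts: "t < s"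
    and x_nonneg: "\<And>i. i < n \<Longrightarrow> 0 \<le> x i" and a: "a < n" and x_a: "0 < x a"
    and rows: "\<And>i. i < n \<Longrightarrow> s * x i \<le> (\<Sum>j<n. adj E i j * x j)"
  shows "t < graph_spectral_radius n E"
proof (rule ccontr)
  assume "\<not> ?thesis"
  then have \<rho>: "graph_spectral_radius n E \<le> t"
    by simp
  have "0 < n"
    using a by simp
  obtain c1 c2 where bound: "\<And>k i j. i < n \<Longrightarrow> j < n
      \<Longrightarrow> \<bar>(mat n n (\<lambda>(i, j). adj E i j / t) ^\<^sub>m k) $$ (i, j)\<bar> \<le> c1 + c2 * real k ^ (n - 1)"
    using adj_mat_pow_poly_bound[OF \<rho> t \<open>0 < n\<close>] by blast
  define B :: "real mat" where "B = mat n n (\<lambda>(i, j). adj E i j / t)"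
  define q where "q = s / t"
  define X where "X = (\<Sum>j<n. x j)"
  have q: "1 < q"
    unfolding q_def using t ts by simp
  have "q * x i \<le> (\<Sum>j<n. B $$ (i, j) * x j)" if "i < n" for i
    using rows[OF that] t that
    by (simp add: q_def B_def sum_divide_distrib[symmetric] divide_right_mono)
  then have growth: "q ^ k * x a \<le> (\<Sum>j<n. (B ^\<^sub>m k) $$ (a, j) * x j)" for k
    using nonneg_mat_pow_supersolution[of B n q x a k] q t a by (simp add: B_def adj_nonneg)
  have poly: "q ^ k * x a \<le> (c1 + c2 * real k ^ (n - 1)) * X" for k
  proof -
    have "(\<Sum>j<n. (B ^\<^sub>m k) $$ (a, j) * x j) \<le> (\<Sum>j<n. (c1 + c2 * real k ^ (n - 1)) * x j)"
      using bound[OF a] x_nonneg by (intro sum_mono mult_right_mono) (auto simp: abs_le_iff B_def)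
    then show ?thesis
      using growth[of k] by (simp add: X_def sum_distrib_left)
  qed
  obtain k where "(c1 + c2 * real k ^ (n - 1)) * X < q ^ k * x a"
    using geometric_exceeds_poly[OF q x_a] .
  then show False
    using poly[of k] by linarith
qed

section \<open>A clique with a sparsely attached remainder\<close>

lemma clique_edges_memD: "{i, j} \<in> clique_edges S \<Longrightarrow> i \<in> S \<and> j \<in> S"
  unfolding clique_edges_def by (auto simp: doubleton_eq_iff)

lemma clique_edges_memI: "i \<in> S \<Longrightarrow> j \<in> S \<Longrightarrow> i \<noteq> j \<Longrightarrow> {i, j} \<in> clique_edges S"
  unfolding clique_edges_def by blast

lemma adj_clique: "clique_edges A \<subseteq> E \<Longrightarrow> i \<in> A \<Longrightarrow> j \<in> A \<Longrightarrow> i \<noteq> j \<Longrightarrow> adj E i j = 1"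
  unfolding adj_def using clique_edges_memI by auto

lemma sum_adj_clique_row:
  assumes "clique_edges A \<subseteq> E" "finite A" "i \<in> A"
  shows "(\<Sum>j\<in>A. adj E i j * f j) = (\<Sum>j\<in>A - {i}. f j)"
proof -
  have "(\<Sum>j\<in>A. adj E i j * f j) = adj E i i * f i + (\<Sum>j\<in>A - {i}. adj E i j * f j)"
    using assms by (simp add: sum.remove)
  also have "\<dots> = (\<Sum>j\<in>A - {i}. f j)"
    using assms by (auto simp: adj_clique intro!: sum.cong) (simp add: adj_def)
  finally show ?thesis .
qed

lemma real_card_Diff_singleton:
  assumes "finite A" "x \<in> A"
  shows "real (card (A - {x})) = real (card A) - 1"
proof -
  have "0 < card A"
    using assms card_gt_0_iff by blast
  then show ?thesis
    using assms by (simp add: of_nat_diff)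
qed

lemma sum_lessThan_split:
  fixes n :: nat
  assumes "A \<subseteq> {0..<n}"
  shows "(\<Sum>j<n. f j) = sum f A + sum f ({0..<n} - A)"
proof -
  have "sum f (A \<union> ({0..<n} - A)) = sum f A + sum f ({0..<n} - A)"
    using finite_subset[OF assms] by (intro sum.union_disjoint) auto
  moreover have "A \<union> ({0..<n} - A) = {..<n}"
    using assms by auto
  ultimately show ?thesis
    by simp
qed

locale clique_with_sparse_rest =
  fixes n h l :: nat and E :: "nat set set" and A :: "nat set"
  assumes A_subset: "A \<subseteq> {0..<n}" and A_clique: "clique_edges A \<subseteq> E"
    and rest_degree: "\<And>u. u \<in> {0..<n} - A \<Longrightarrow> card {j \<in> {0..<n} - A. {u, j} \<in> E \<and> u \<noteq> j} \<le> h"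
    and cross_edges: "card {(u, z) \<in> ({0..<n} - A) \<times> A. {u, z} \<in> E} \<le> l"
    and card_rest: "card ({0..<n} - A) \<le> l * (h + 1)"
    and A_large: "2 * l < card A" "h * (l * (h + 1) + 1) < card A"
begin

abbreviation rest :: "nat set" where
  "rest \<equiv> {0..<n} - A"

definition \<gamma> :: real where
  "\<gamma> = 1 / (real h + 1)"

definition deg_A :: "nat \<Rightarrow> real" where
  "deg_A u = (\<Sum>z\<in>A. adj E u z)"

text \<open>
  Row \<open>u\<close> of \<open>Adj w\<close> for \<open>u\<close> outside the clique is \<open>deg_A u\<close> plus at most \<open>h (l + \<gamma>) / |A|\<close>,
  which is less than \<open>\<gamma>\<close> by the size of \<open>A\<close>.
\<close>

definition w :: "nat \<Rightarrow> real" where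
  "w i = (if i \<in> A then 1 else (deg_A i + \<gamma>) / card A)"

lemma finite_A: "finite A" and finite_rest: "finite rest"
  using A_subset finite_subset by auto

lemma card_A_pos: "0 < real (card A)"
  using A_large(1) by simp

lemma deg_A_nonneg: "0 \<le> deg_A u"
  unfolding deg_A_def by (simp add: sum_nonneg adj_nonneg)

lemma sum_deg_A_le: "(\<Sum>u\<in>rest. deg_A u) \<le> l"
proof -
  have "(\<Sum>u\<in>rest. deg_A u) = card {(u, z) \<in> rest \<times> A. {u, z} \<in> E}"
    unfolding deg_A_def by (rule sum_sum_adj_eq_card) (use finite_A in auto)
  then show ?thesis
    using cross_edges by simp
qed

lemma deg_A_le: "u \<in> rest \<Longrightarrow> deg_A u \<le> l"
  using member_le_sum[of u rest deg_A] deg_A_nonneg sum_deg_A_le finite_rest by fastforce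

lemma w_pos: "0 < w i"
  using deg_A_nonneg[of i] card_A_pos
  by (auto intro!: divide_pos_pos add_nonneg_pos simp: w_def \<gamma>_def)

lemma sum_w_rest_less_1: "(\<Sum>j\<in>rest. w j) < 1"
proof -
  have "real (card rest) \<le> real (l * (h + 1))"
    using card_rest by (simp only: of_nat_le_iff)
  then have \<gamma>_rest: "real (card rest) * \<gamma> \<le> l"
    unfolding \<gamma>_def by (simp add: pos_divide_le_eq algebra_simps)
  have "real (2 * l) < card A"
    using A_large(1) by (simp only: of_nat_less_iff)
  then have "2 * real l < card A"
    by simp
  have "(\<Sum>j\<in>rest. w j) = (\<Sum>j\<in>rest. (deg_A j + \<gamma>) / card A)"
    by (intro sum.cong) (auto simp: w_def)
  also have "\<dots> = ((\<Sum>j\<in>rest. deg_A j) + real (card rest) * \<gamma>) / card A"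
    by (simp add: sum_divide_distrib[symmetric] sum.distrib)
  also have "\<dots> \<le> 2 * l / card A"
    using sum_deg_A_le \<gamma>_rest card_A_pos by (intro divide_right_mono) auto
  also have "\<dots> < 1"
    using \<open>2 * real l < card A\<close> card_A_pos by simp
  finally show ?thesis .
qed

lemma row_clique_less:
  assumes i: "i \<in> A"
  shows "(\<Sum>j<n. adj E i j * w j) < card A * w i"
proof -
  have "(\<Sum>j\<in>A. adj E i j * w j) = (\<Sum>j\<in>A - {i}. w j)"
    by (rule sum_adj_clique_row[OF A_clique finite_A i])
  also have "\<dots> = real (card A) - 1"
    using real_card_Diff_singleton[OF finite_A i] by (simp add: w_def)
  finally have "(\<Sum>j\<in>A. adj E i j * w j) = real (card A) - 1" .
  moreover have "(\<Sum>j\<in>rest. adj E i j * w j) \<le> (\<Sum>j\<in>rest. w j)"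
    using w_pos by (intro sum_mono) (auto simp: adj_def less_imp_le)
  moreover have "card A * w i = card A"
    using i by (simp add: w_def)
  ultimately show ?thesis
    using sum_lessThan_split[OF A_subset, of "\<lambda>j. adj E i j * w j"] sum_w_rest_less_1 by linarith
qed

lemma h_slack: "h * (l + \<gamma>) < \<gamma> * card A"
proof -
  have "real h * (l + \<gamma>) * (real h + 1) = real h * (real l * (real h + 1) + 1)"
    unfolding \<gamma>_def by (simp add: field_simps)
  also have "\<dots> = real (h * (l * (h + 1) + 1))"
    by (simp add: algebra_simps)
  also have "\<dots> < card A"
    using A_large(2) by (simp only: of_nat_less_iff)
  finally have "real h * (l + \<gamma>) < card A / (real h + 1)"
    by (simp add: pos_less_divide_eq)
  then show ?thesis
    unfolding \<gamma>_def by simp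
qed

lemma row_rest_less:
  assumes i: "i \<in> rest"
  shows "(\<Sum>j<n. adj E i j * w j) < card A * w i"
proof -
  have "(\<Sum>j\<in>rest. adj E i j * w j) \<le> (\<Sum>j\<in>rest. adj E i j * ((l + \<gamma>) / card A))"
    using deg_A_le card_A_pos
    by (intro sum_mono mult_left_mono) (auto simp: w_def adj_nonneg divide_right_mono)
  also have "\<dots> = (\<Sum>j\<in>rest. adj E i j) * ((l + \<gamma>) / card A)"
    by (rule sum_distrib_right[symmetric])
  also have "\<dots> \<le> h * ((l + \<gamma>) / card A)"
    using rest_degree[OF i] sum_adj_eq_card[OF finite_rest, of E i] card_A_pos
    by (intro mult_right_mono) (auto simp: \<gamma>_def)
  also have "\<dots> < \<gamma>"
    using h_slack card_A_pos by (simp add: pos_divide_less_eq)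
  finally have "(\<Sum>j\<in>rest. adj E i j * w j) < \<gamma>" .
  moreover have "(\<Sum>j\<in>A. adj E i j * w j) = deg_A i"
    unfolding deg_A_def by (intro sum.cong) (auto simp: w_def)
  moreover have "card A * w i = deg_A i + \<gamma>"
    using i card_A_pos by (simp add: w_def)
  ultimately show ?thesis
    using sum_lessThan_split[OF A_subset, of "\<lambda>j. adj E i j * w j"] by linarith
qed

theorem graph_spectral_radius_less_card: "graph_spectral_radius n E < card A"
proof (rule graph_spectral_radius_less)
  have "A \<noteq> {}"
    using A_large(1) by auto
  then show "0 < n"
    using A_subset by auto
  show "0 < w i" for i
    by (rule w_pos)
  show "(\<Sum>j<n. adj E i j * w j) < card A * w i" if "i < n" for i
    using row_clique_less row_rest_less that by (cases "i \<in> A") auto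
qed

end

locale clique_with_pendant =
  fixes n :: nat and E :: "nat set set" and A :: "nat set" and a c :: nat
  assumes A_subset: "A \<subseteq> {0..<n}" and A_clique: "clique_edges A \<subseteq> E" and A_large: "3 \<le> card A"
    and a: "a \<in> A" and c: "c < n" "c \<notin> A" and pendant: "{a, c} \<in> E"
begin

abbreviation M :: real where
  "M \<equiv> real (card A)"

definition \<alpha> :: real where
  "\<alpha> = 1 / (2 * M^2)"

definition \<epsilon> :: real where
  "\<epsilon> = 1 / M"

text \<open>
  The all-ones vector on the clique, raised by \<open>\<alpha>\<close> at \<open>a\<close> and with the value \<open>\<epsilon>\<close> at \<open>c\<close>:
  the pendant edge gives row \<open>a\<close> the surplus \<open>\<epsilon>\<close> needed against \<open>(M - 1 + \<alpha>)(1 + \<alpha>)\<close>.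
\<close>

definition x :: "nat \<Rightarrow> real" where
  "x i = (if i \<in> A then 1 else if i = c then \<epsilon> else 0) + (if i = a then \<alpha> else 0)"

lemma finite_A: "finite A"
  using A_subset finite_subset by auto

lemma M_ge_3: "3 \<le> M"
  using A_large by simp

lemma \<alpha>_pos: "0 < \<alpha>" and \<alpha>_le_1: "\<alpha> \<le> 1"
proof -
  have "1 \<le> 2 * M^2"
    using power_mono[OF M_ge_3, of 2] by simp
  then show "0 < \<alpha>" "\<alpha> \<le> 1"
    unfolding \<alpha>_def using A_large by (auto simp: divide_le_eq_1)
qed

lemma c_ne_a: "c \<noteq> a"
  using a c by auto

lemma x_A: "j \<in> A \<Longrightarrow> x j = 1 + (if j = a then \<alpha> else 0)"
  unfolding x_def by simp

lemma x_c: "x c = \<epsilon>"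
  using c c_ne_a unfolding x_def by simp

lemma x_other: "j \<notin> A \<Longrightarrow> j \<noteq> c \<Longrightarrow> x j = 0"
  using a unfolding x_def by auto

lemma x_nonneg: "0 \<le> x i"
  using M_ge_3 \<alpha>_pos unfolding x_def \<epsilon>_def by auto

lemma adj_pendant: "adj E a c = 1" "adj E c a = 1"
  using pendant c_ne_a by (simp_all add: adj_def insert_commute)

lemma sum_subset_le_row: "S \<subseteq> {0..<n} \<Longrightarrow> (\<Sum>j\<in>S. adj E i j * x j) \<le> (\<Sum>j<n. adj E i j * x j)"
  using x_nonneg adj_nonneg by (intro sum_mono2) (auto simp: atLeast0LessThan)

lemma sum_clique_row: "i \<in> A \<Longrightarrow> (\<Sum>j\<in>A. adj E i j * x j) = M - 1 + (if i = a then 0 else \<alpha>)"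
proof -
  assume i: "i \<in> A"
  have "(\<Sum>j\<in>A. adj E i j * x j) = (\<Sum>j\<in>A - {i}. 1 + (if j = a then \<alpha> else 0))"
    unfolding sum_adj_clique_row[OF A_clique finite_A i] by (intro sum.cong) (auto simp: x_A)
  also have "\<dots> = real (card (A - {i})) + (if i = a then 0 else \<alpha>)"
    using finite_A a by (simp add: sum.distrib)
  finally show ?thesis
    using real_card_Diff_singleton[OF finite_A i] by simp
qed

lemma row_a: "(M - 1 + \<alpha>) * x a \<le> (\<Sum>j<n. adj E a j * x j)"
proof -
  have "\<alpha> * \<alpha> \<le> \<alpha> * M"
    using \<alpha>_pos \<alpha>_le_1 M_ge_3 by (intro mult_left_mono) auto
  then have "(M - 1 + \<alpha>) * (1 + \<alpha>) \<le> M - 1 + 2 * (\<alpha> * M)"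
    by (simp add: algebra_simps)
  also have "2 * (\<alpha> * M) = \<epsilon>"
    using M_ge_3 unfolding \<alpha>_def \<epsilon>_def by (simp add: power2_eq_square)
  also have "M - 1 + \<epsilon> = (\<Sum>j\<in>insert c A. adj E a j * x j)"
    using finite_A c sum_clique_row[OF a] adj_pendant x_c by simp
  also have "\<dots> \<le> (\<Sum>j<n. adj E a j * x j)"
    using A_subset c by (intro sum_subset_le_row) auto
  finally show ?thesis
    using a x_A by simp
qed

lemma row_c: "(M - 1 + \<alpha>) * x c \<le> (\<Sum>j<n. adj E c j * x j)"
proof -
  have "(M - 1 + \<alpha>) * \<epsilon> \<le> 1"
    using M_ge_3 \<alpha>_le_1 unfolding \<epsilon>_def by (simp add: divide_le_eq_1)
  also have "\<dots> \<le> adj E c a * x a"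
    using adj_pendant x_A[OF a] \<alpha>_pos by simp
  also have "\<dots> \<le> (\<Sum>j<n. adj E c j * x j)"
    using sum_subset_le_row[of "{a}" c] a A_subset by auto
  finally show ?thesis
    using x_c by simp
qed

lemma row_ge: "(M - 1 + \<alpha>) * x i \<le> (\<Sum>j<n. adj E i j * x j)"
proof -
  consider "i = a" | "i \<in> A" "i \<noteq> a" | "i = c" | "i \<notin> A" "i \<noteq> c"
    by blast
  then show ?thesis
  proof cases
    case 2
    then show ?thesis
      using sum_subset_le_row[OF A_subset, of i] sum_clique_row[of i] x_A[of i] by simp
  next
    case 4
    then show ?thesis
      using x_other[of i] x_nonneg adj_nonneg by (simp add: sum_nonneg)
  qed (use row_a row_c in simp_all)
qed

theorem graph_spectral_radius_greater_card_minus_1: "M - 1 < graph_spectral_radius n E"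
proof (rule graph_spectral_radius_greater[where s = "M - 1 + \<alpha>" and x = x and a = a])
  show "0 < M - 1" "M - 1 < M - 1 + \<alpha>"
    using M_ge_3 \<alpha>_pos by auto
  show "a < n" "0 < x a"
    using a A_subset \<alpha>_pos x_A by auto
qed (use x_nonneg row_ge in auto)

end

section \<open>The graph class\<close>

text \<open>
  The vertex partition and edge set of a graph of the class, as in \<open>in_K_class\<close>, keeping from
  the cardinality constraint on the extra edges \<open>Y\<close> only its consequence \<open>|Y| + r - 1 \<le> \<lambda>\<close>
  (from \<open>t \<le> \<delta>\<close>).
\<close>

locale K_class_layout =
  fixes n h r l :: nat and E :: "nat set set" and A C :: "nat set" and B :: "nat \<Rightarrow> nat set"
    and v a c :: nat and b :: "nat \<Rightarrow> nat" and Ev X Y :: "nat set set"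
  assumes r: "2 \<le> r"
    and partition: "A \<union> (\<Union>i<r-2. B i) \<union> C \<union> {v} = {0..<n}"
    and card_B: "\<And>i. i < r - 2 \<Longrightarrow> card (B i) = h + 1" and card_C: "card C = h"
    and A_B: "\<And>i. i < r - 2 \<Longrightarrow> A \<inter> B i = {}"
    and B_B: "\<And>i j. i < r - 2 \<Longrightarrow> j < r - 2 \<Longrightarrow> i \<noteq> j \<Longrightarrow> B i \<inter> B j = {}"
    and B_C: "\<And>i. i < r - 2 \<Longrightarrow> B i \<inter> C = {}" and A_C: "A \<inter> C = {}"
    and v: "v \<notin> A" "\<And>i. i < r - 2 \<Longrightarrow> v \<notin> B i" "v \<notin> C"
    and Ev: "Ev \<subseteq> {{v, x} | x. x \<in> C}"
    and a: "a \<in> A" and b: "\<And>i. i < r - 2 \<Longrightarrow> b i \<in> B i" and c: "c \<in> C"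
    and X: "X = {{a, b i} | i. i < r - 2} \<union> {{a, c}}"
    and Y: "Y \<subseteq> {{x, y} | x y. x \<in> A \<and> y \<in> (\<Union>i<r-2. B i) \<union> C \<union> {v}}"
    and card_Y: "card Y + (r - 1) \<le> l"
    and E: "E = clique_edges A \<union> (\<Union>i<r-2. clique_edges (B i)) \<union> clique_edges C \<union> Ev \<union> X \<union> Y"
begin

abbreviation rest :: "nat set" where
  "rest \<equiv> {0..<n} - A"

lemma rest_eq: "rest = (\<Union>i<r-2. B i) \<union> C \<union> {v}"
  using partition A_B A_C v(1) by blast

lemma A_subset: "A \<subseteq> {0..<n}"
  using partition by blast

lemma finite_B: "i < r - 2 \<Longrightarrow> finite (B i)" and finite_C: "finite C"
  using partition finite_subset[of _ "{0..<n}"] by blast+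

lemma card_rest: "card rest = (r - 1) * (h + 1)"
proof -
  have "card (\<Union>i<r-2. B i) = (r - 2) * (h + 1)"
    using finite_B card_B B_B by (simp add: card_UN_disjoint)
  moreover have "card ((\<Union>i<r-2. B i) \<union> C) = card (\<Union>i<r-2. B i) + card C"
    using finite_B finite_C B_C by (intro card_Un_disjoint) auto
  moreover have "v \<notin> (\<Union>i<r-2. B i) \<union> C"
    using v by blast
  ultimately have "card rest = (r - 2) * (h + 1) + h + 1"
    unfolding rest_eq using finite_B finite_C card_C by simp
  also have "\<dots> = (r - 1) * (h + 1)"
  proof -
    have "r - 1 = Suc (r - 2)"
      using r by simp
    then show ?thesis
      by simp
  qed
  finally show ?thesis .
qed

lemma A_clique: "clique_edges A \<subseteq> E"
  using E by blast

lemma edge_a_c: "{a, c} \<in> E"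
  using E X by blast

lemma c_rest: "c < n" "c \<notin> A"
  using c partition A_C by auto

lemma XY_edge: "e \<in> X \<union> Y \<Longrightarrow> \<exists>x y. e = {x, y} \<and> x \<in> A \<and> y \<in> rest"
  using X Y a b c unfolding rest_eq by blast

lemma edge_within_rest:
  assumes "i \<in> rest" "j \<in> rest" "{i, j} \<in> E"
  shows "(\<exists>k<r-2. i \<in> B k \<and> j \<in> B k) \<or> (i \<in> C \<and> j \<in> C) \<or> (i = v \<and> j \<in> C) \<or> (j = v \<and> i \<in> C)"
proof -
  have "{i, j} \<notin> X \<union> Y"
    using XY_edge assms(1,2) by (fastforce simp: doubleton_eq_iff)
  moreover have "{i, j} \<notin> clique_edges A"
    using clique_edges_memD assms(1) by blast
  moreover have "(i = v \<and> j \<in> C) \<or> (j = v \<and> i \<in> C)" if "{i, j} \<in> Ev"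
    using that Ev by (auto simp: doubleton_eq_iff)
  ultimately show ?thesis
    using assms(3) clique_edges_memD unfolding E by blast
qed

lemma rest_degree_le:
  assumes u: "u \<in> rest"
  shows "card {j \<in> rest. {u, j} \<in> E \<and> u \<noteq> j} \<le> h"
proof -
  let ?N = "{j \<in> rest. {u, j} \<in> E \<and> u \<noteq> j}"
  obtain S where "finite S" "card S \<le> h" "?N \<subseteq> S"
  proof -
    consider k where "k < r - 2" "u \<in> B k" | "u \<in> C" | "u = v"
      using u unfolding rest_eq by blast
    then show ?thesis
    proof cases
      case 1
      have "?N \<subseteq> B k - {u}"
        using 1 edge_within_rest[OF u] B_B B_C v(2) by blast
      then show ?thesis
        using that[of "B k - {u}"] 1 finite_B card_B by simp
    next
      case 2
      have "?N \<subseteq> insert v (C - {u})"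
        using 2 edge_within_rest[OF u] B_C v(3) by blast
      moreover have "card (insert v (C - {u})) \<le> h"
        using 2 finite_C v(3) card_C card_gt_0_iff[of C] by auto
      ultimately show ?thesis
        using that[of "insert v (C - {u})"] finite_C by simp
    next
      case 3
      have "?N \<subseteq> C"
        using 3 edge_within_rest[OF u] v by blast
      then show ?thesis
        using that[of C] finite_C card_C by simp
    qed
  qed
  then show ?thesis
    using card_mono order_trans by blast
qed

lemma cross_edge_in_XY:
  assumes "u \<in> rest" "z \<in> A" "{u, z} \<in> E"
  shows "{u, z} \<in> X \<union> Y"
  using assms clique_edges_memD Ev A_B A_C v(1) unfolding E rest_eq
  by (blast dest: doubleton_eq_iff[THEN iffD1])

lemma card_cross_edges_le: "card {(u, z) \<in> rest \<times> A. {u, z} \<in> E} \<le> l"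
proof -
  have "finite (X \<union> Y)"
  proof (rule finite_subset)
    show "X \<union> Y \<subseteq> Pow {0..<n}"
      using XY_edge A_subset by blast
  qed simp
  have "card {(u, z) \<in> rest \<times> A. {u, z} \<in> E} \<le> card (X \<union> Y)"
  proof (rule card_inj_on_le)
    show "inj_on (\<lambda>(u, z). {u, z}) {(u, z) \<in> rest \<times> A. {u, z} \<in> E}"
      by (auto intro!: inj_onI simp: doubleton_eq_iff)
    show "(\<lambda>(u, z). {u, z}) ` {(u, z) \<in> rest \<times> A. {u, z} \<in> E} \<subseteq> X \<union> Y"
      using cross_edge_in_XY by auto
  qed fact
  also have "\<dots> \<le> card X + card Y"
    by (rule card_Un_le)
  also have "card X \<le> r - 1"
  proof -
    have "X = (\<lambda>i. {a, b i}) ` {..<r-2} \<union> {{a, c}}"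
      unfolding X by auto
    then have "card X \<le> card ((\<lambda>i. {a, b i}) ` {..<r-2}) + 1"
      using card_Un_le[of _ "{{a, c}}"] by simp
    also have "\<dots> \<le> r - 1"
      using card_image_le[of "{..<r-2}" "\<lambda>i. {a, b i}"] r by simp
    finally show ?thesis .
  qed
  finally show ?thesis
    using card_Y by linarith
qed

end

lemma in_K_class_layout:
  assumes "in_K_class n \<delta> h r l E" and r: "2 \<le> r"
  obtains A C B v a c b Ev X Y where "K_class_layout n h r l E A C B v a c b Ev X Y"
    and "card A = n - (r - 1) * (h + 1)"
proof -
  from assms(1) obtain A B C v t a b c Ev X Y where
    partition: "A \<union> (\<Union>i<r-2. B i) \<union> C \<union> {v} = {0..<n}"
    and card_A: "card A = n - (r - 1) * (h + 1)"
    and card_BC: "\<forall>i<r-2. card (B i) = h + 1" "card C = h"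
    and disjoint: "\<forall>i<r-2. A \<inter> B i = {}" "\<forall>i<r-2. \<forall>j<r-2. i \<noteq> j \<longrightarrow> B i \<inter> B j = {}"
      "\<forall>i<r-2. B i \<inter> C = {}" "A \<inter> C = {}" "v \<notin> A" "\<forall>i<r-2. v \<notin> B i" "v \<notin> C"
    and t: "t \<le> \<delta>" and Ev: "Ev \<subseteq> {{v, x} | x. x \<in> C}"
    and abc: "a \<in> A" "\<forall>i<r-2. b i \<in> B i" "c \<in> C"
    and X: "X = {{a, b i} | i. i < r - 2} \<union> {{a, c}}"
    and Y: "Y \<subseteq> {{x, y} | x y. x \<in> A \<and> y \<in> (\<Union>i<r-2. B i) \<union> C \<union> {v}}"
    and card_Y: "int (card Y) = int l - int r + 1 - int \<delta> + int t"
    and E: "E = clique_edges A \<union> (\<Union>i<r-2. clique_edges (B i)) \<union> clique_edges C \<union> Ev \<union> X \<union> Y"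
    unfolding in_K_class_def by (elim conjE exE) (rule that; assumption)
  have "card Y + (r - 1) \<le> l"
    using card_Y t r by linarith
  with r partition card_BC disjoint Ev abc X Y E card_A show ?thesis
    by (intro that[of A C B v a c b Ev X Y] K_class_layout.intro) auto
qed

lemma clique_size_bounds:
  fixes h l k m :: nat
  assumes size: "(l + 1) * (h + 1)^2 \<le> m + k * (h + 1)" and "k \<le> l" "1 \<le> h"
  shows "3 \<le> m" "2 * l < m" "h * (l * (h + 1) + 1) < m"
proof -
  have "k * (h + 1) \<le> l * (h + 1)"
    using \<open>k \<le> l\<close> by (rule mult_le_mono1)
  then have m: "(h + 1) * (l * h + h + 1) \<le> m"
    using size by (simp add: power2_eq_square algebra_simps)
  have "h * (l * (h + 1) + 1) < (h + 1) * (l * h + h + 1)"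
    by (simp add: algebra_simps)
  then show "h * (l * (h + 1) + 1) < m"
    using m by linarith
  have "l \<le> l * h"
    using \<open>1 \<le> h\<close> by simp
  then have "2 * (l + 2) \<le> (h + 1) * (l * h + h + 1)"
    using \<open>1 \<le> h\<close> by (intro mult_le_mono) linarith+
  then have "2 * (l + 2) \<le> m"
    using m by (rule order_trans)
  then show "2 * l < m" "3 \<le> m"
    by simp_all
qed

theorem lemma3p3:
  fixes r \<delta> n h l :: nat and E :: "nat set set"
  assumes "r \<ge> 2" and "\<delta> \<ge> 1" and "n \<ge> 1" and "h \<ge> 1"
    and "n \<ge> (l + 1) * (h + 1)^2" and "l \<ge> r - 1" and "h \<ge> \<delta>"
    and "in_K_class n \<delta> h r l E"
  shows "real n - real ((r - 1) * (h + 1)) - 1 < graph_spectral_radius n E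
     \<and> graph_spectral_radius n E < real n - real ((r - 1) * (h + 1))"
proof -
  obtain A C B v a c b Ev X Y where layout: "K_class_layout n h r l E A C B v a c b Ev X Y"
    and card_A: "card A = n - (r - 1) * (h + 1)"
    using in_K_class_layout[OF assms(8,1)] .
  interpret K_class_layout n h r l E A C B v a c b Ev X Y
    by (fact layout)
  have n_ge: "(r - 1) * (h + 1) \<le> n"
    using card_rest card_mono[of "{0..<n}" rest] by simp
  then have "(l + 1) * (h + 1)^2 \<le> card A + (r - 1) * (h + 1)"
    using assms(5) card_A by simp
  note large = clique_size_bounds[OF this assms(6,4)]
  have "card rest \<le> l * (h + 1)"
    unfolding card_rest using assms(6) by (rule mult_le_mono1)
  with large have "clique_with_sparse_rest n h l E A"
    by unfold_locales (use A_subset A_clique rest_degree_le card_cross_edges_le in auto)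
  then have upper: "graph_spectral_radius n E < card A"
    by (rule clique_with_sparse_rest.graph_spectral_radius_less_card)
  have "clique_with_pendant n E A a c"
    by unfold_locales (use A_subset A_clique large(1) a c_rest edge_a_c in auto)
  then have lower: "real (card A) - 1 < graph_spectral_radius n E"
    by (rule clique_with_pendant.graph_spectral_radius_greater_card_minus_1)
  show ?thesis
    using upper lower card_A n_ge by (simp add: of_nat_diff)
qed

end
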